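(* Let $t>0$ and let $X\subseteq Z$ be finite subsets of $\mathbb{R}^D$. Then $\mathrm{Mag}(tZ)=\mathrm{Mag}(tX)$ if and only if $X$ and $Z$ are magnitude-equivalent at scale $t$.
   Context: For a finite set $A\subset\mathbb{R}^D$ and $t>0$, the matrix $\zeta_{tA}(x,y)=\exp(-t\|x-y\|)$ ($x,y\in A$) is invertible; $\mathbf{w}^t_A=\zeta_{tA}^{-1}\mathbb{1}$ is the weighting vector of $A$ at scale $t$ and $\mathrm{Mag}(tA)=\sum_{x\in A}\mathbf{w}^t_A(x)$. Finite $X,Y\subset\mathbb{R}^D$ are magnitude-equivalent at scale $t$ if $\{x\in X:\mathbf{w}^t_X(x)\neq0\}=\{y\in Y:\mathbf{w}^t_Y(y)\neq0\}$. *)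

theory Defs
  imports "HOL-Analysis.Analysis"
begin

text \<open>Weighting vector of a finite set A at scale t: the unique function w, supported on A,
  with (zeta_tA w)(x) = 1 for all x in A, where zeta_tA(x,y) = exp(-t * norm(x - y)).
  (Uniqueness/existence is the invertibility of the similarity matrix.)\<close>
definition weighting :: "real \<Rightarrow> 'a::euclidean_space set \<Rightarrow> 'a \<Rightarrow> real" where
  "weighting t A = (THE w. (\<forall>x\<in>A. (\<Sum>y\<in>A. exp (- t * norm (x - y)) * w y) = 1)
                           \<and> (\<forall>x. x \<notin> A \<longrightarrow> w x = 0))"

definition Mag :: "real \<Rightarrow> 'a::euclidean_space set \<Rightarrow> real" where
  "Mag t A = (\<Sum>x\<in>A. weighting t A x)"

definition mag_equiv :: "real \<Rightarrow> 'a::euclidean_space set \<Rightarrow> 'a set \<Rightarrow> bool" where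
  "mag_equiv t X Y \<longleftrightarrow> {x\<in>X. weighting t X x \<noteq> 0} = {y\<in>Y. weighting t Y y \<noteq> 0}"

end

theory Submission
  imports Defs "HOL-Probability.Distributions"
begin

text \<open>The Laplace kernel \<open>exp (- t \<bar>x - y\<bar>)\<close> is strictly positive definite on finite sets,
  being a superposition of Gaussian kernels. Hence weightings exist and are unique. For \<open>X \<subseteq> Z\<close> the
  difference \<open>d = w\<^sub>Z - w\<^sub>X\<close> of the weightings satisfies \<open>d\<^sup>T \<zeta>\<^sub>Z d = Mag(tZ) - Mag(tX)\<close>, so equal
  magnitudes force \<open>w\<^sub>Z = w\<^sub>X\<close>. Conversely, if \<open>w\<^sub>Z\<close> vanishes off \<open>X\<close> it solves the weighting
  equations of \<open>X\<close>, and uniqueness again gives \<open>w\<^sub>Z = w\<^sub>X\<close>.\<close>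

section \<open>Positive definite kernels\<close>

definition quad_form :: "('a \<Rightarrow> 'a \<Rightarrow> real) \<Rightarrow> 'a set \<Rightarrow> ('a \<Rightarrow> real) \<Rightarrow> real" where
  "quad_form K A v = (\<Sum>x\<in>A. \<Sum>y\<in>A. v x * v y * K x y)"

definition positive_definite_on :: "'a set \<Rightarrow> ('a \<Rightarrow> 'a \<Rightarrow> real) \<Rightarrow> bool" where
  "positive_definite_on A K \<longleftrightarrow> (\<forall>v. (\<exists>x\<in>A. v x \<noteq> 0) \<longrightarrow> 0 < quad_form K A v)"

definition schur_complement :: "('a \<Rightarrow> 'a \<Rightarrow> real) \<Rightarrow> 'a \<Rightarrow> 'a \<Rightarrow> 'a \<Rightarrow> real" where
  "schur_complement K a x y = K x y - K x a * K a y / K a a"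

lemma quad_form_eq_sum_mult: "quad_form K A v = (\<Sum>x\<in>A. v x * (\<Sum>y\<in>A. K x y * v y))"
  by (simp add: quad_form_def sum_distrib_left mult_ac)

lemma quad_form_cmult: "quad_form (\<lambda>x y. c * K x y) A v = c * quad_form K A v"
  by (simp add: quad_form_def sum_distrib_left mult_ac)

lemma quad_form_cong: "(\<And>x. x \<in> A \<Longrightarrow> u x = v x) \<Longrightarrow> quad_form K A u = quad_form K A v"
  by (simp add: quad_form_def)

lemma sum_mult_sum_kernel_commute:
  fixes K :: "'a \<Rightarrow> 'a \<Rightarrow> real"
  assumes "\<And>x y. K x y = K y x"
  shows "(\<Sum>x\<in>A. u x * (\<Sum>y\<in>A. K x y * v y)) = (\<Sum>y\<in>A. v y * (\<Sum>x\<in>A. K y x * u x))"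
proof -
  have "(\<Sum>x\<in>A. u x * (\<Sum>y\<in>A. K x y * v y)) = (\<Sum>x\<in>A. \<Sum>y\<in>A. v y * (K y x * u x))"
    unfolding sum_distrib_left by (intro sum.cong refl) (simp add: assms mult_ac)
  also have "\<dots> = (\<Sum>y\<in>A. \<Sum>x\<in>A. v y * (K y x * u x))"
    by (rule sum.swap)
  finally show ?thesis
    by (simp only: sum_distrib_left)
qed

lemma quad_form_insert:
  assumes "finite A" "a \<notin> A" and sym: "\<And>x. x \<in> A \<Longrightarrow> K x a = K a x"
  shows "quad_form K (insert a A) v
           = v a * v a * K a a + 2 * v a * (\<Sum>y\<in>A. K a y * v y) + quad_form K A v"
proof -
  have "(\<Sum>x\<in>A. v x * v a * K x a) = v a * (\<Sum>y\<in>A. K a y * v y)"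
    by (simp add: sum_distrib_left sym mult_ac cong: sum.cong)
  then show ?thesis
    using assms(1,2) by (simp add: quad_form_def sum.distrib sum_distrib_left mult_ac)
qed

lemma positive_definite_on_diag:
  assumes "finite A" "positive_definite_on A K" "a \<in> A"
  shows "0 < K a a"
proof -
  have "0 < quad_form K A (\<lambda>x. of_bool (x = a))"
    using assms(2,3) unfolding positive_definite_on_def by force
  also have "quad_form K A (\<lambda>x. of_bool (x = a)) = K a a"
    using assms(1,3) by (simp add: quad_form_eq_sum_mult)
  finally show ?thesis .
qed

lemma positive_definite_on_quad_form_le_0:
  assumes "positive_definite_on A K" "quad_form K A v \<le> 0" "x \<in> A"
  shows "v x = 0"
  using assms unfolding positive_definite_on_def by force

text \<open>Choosing the value at \<open>a\<close> that minimises the form eliminates \<open>a\<close>: one step of Gaussian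
  elimination on the Gram matrix.\<close>
lemma quad_form_schur_complement:
  fixes v :: "'a \<Rightarrow> real"
  assumes "finite A" "a \<notin> A" "K a a \<noteq> 0" and sym: "\<And>x. x \<in> A \<Longrightarrow> K x a = K a x"
  defines "s \<equiv> \<Sum>y\<in>A. K a y * v y"
  shows "quad_form K (insert a A) (v(a := - s / K a a)) = quad_form (schur_complement K a) A v"
proof -
  let ?v = "v(a := - s / K a a)"
  have "quad_form K A ?v = quad_form K A v"
    using assms(2) by (intro quad_form_cong) auto
  moreover have "(\<Sum>y\<in>A. K a y * ?v y) = s"
    using assms(2) unfolding s_def by (intro sum.cong) auto
  ultimately have "quad_form K (insert a A) ?v
          = s * s / K a a - 2 * s * s / K a a + quad_form K A v"
    using assms(3) quad_form_insert[where K=K, OF assms(1,2) sym, of ?v]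
    by (simp add: power2_eq_square field_simps)
  also have "quad_form (schur_complement K a) A v = quad_form K A v - s * s / K a a"
    by (simp add: quad_form_def schur_complement_def s_def sum_subtractf right_diff_distrib
        sum_distrib_left sum_distrib_right sum_divide_distrib sym mult_ac cong: sum.cong)
  ultimately show ?thesis by simp
qed

lemma positive_definite_on_schur_complement:
  assumes "finite A" "a \<notin> A" "positive_definite_on (insert a A) K"
    and sym: "\<And>x. x \<in> A \<Longrightarrow> K x a = K a x"
  shows "positive_definite_on A (schur_complement K a)"
  unfolding positive_definite_on_def
proof (intro allI impI)
  fix v :: "'a \<Rightarrow> real"
  assume "\<exists>x\<in>A. v x \<noteq> 0"
  then have "\<exists>x\<in>insert a A. (v(a := - (\<Sum>y\<in>A. K a y * v y) / K a a)) x \<noteq> 0"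
    using assms(2) by force
  then have "0 < quad_form K (insert a A) (v(a := - (\<Sum>y\<in>A. K a y * v y) / K a a))"
    using assms(3) unfolding positive_definite_on_def by blast
  also have "\<dots> = quad_form (schur_complement K a) A v"
  proof (rule quad_form_schur_complement[where K=K, OF assms(1,2) _ sym])
    show "K a a \<noteq> 0"
      using positive_definite_on_diag[OF _ assms(3), of a] assms(1) by simp
  qed
  finally show "0 < quad_form (schur_complement K a) A v" .
qed

lemma positive_definite_on_solvable:
  assumes "finite A" "positive_definite_on A K"
    and "\<And>x y. x \<in> A \<Longrightarrow> y \<in> A \<Longrightarrow> K x y = K y x"
  shows "\<exists>w. \<forall>x\<in>A. (\<Sum>y\<in>A. K x y * w y) = b x"
  using assms
proof (induction A arbitrary: K b rule: finite_induct)
  case empty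
  then show ?case by simp
next
  case (insert a A)
  have sym: "\<And>x. x \<in> A \<Longrightarrow> K x a = K a x"
    using insert.prems(2) by blast
  have Kaa: "0 < K a a"
    using positive_definite_on_diag[OF _ insert.prems(1)] insert.hyps(1) by blast
  let ?S = "schur_complement K a"
  have "positive_definite_on A ?S"
    using positive_definite_on_schur_complement[OF insert.hyps(1,2) insert.prems(1) sym] .
  moreover have "?S x y = ?S y x" if "x \<in> A" "y \<in> A" for x y
    using insert.prems(2) that by (simp add: schur_complement_def)
  ultimately obtain u
    where u: "\<And>x. x \<in> A \<Longrightarrow> (\<Sum>y\<in>A. ?S x y * u y) = b x - K x a * b a / K a a"
    using insert.IH[of ?S "\<lambda>x. b x - K x a * b a / K a a"] by blast
  define w where "w = u(a := (b a - (\<Sum>y\<in>A. K a y * u y)) / K a a)"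
  have row: "(\<Sum>y\<in>insert a A. K x y * w y)
               = K x a * (b a - (\<Sum>y\<in>A. K a y * u y)) / K a a + (\<Sum>y\<in>A. K x y * u y)" for x
    using insert.hyps by (simp add: w_def) (auto intro!: sum.cong)
  have "(\<Sum>y\<in>insert a A. K x y * w y) = b x" if "x \<in> A" for x
  proof -
    have "(\<Sum>y\<in>A. K x y * u y) - K x a / K a a * (\<Sum>y\<in>A. K a y * u y) = b x - K x a * b a / K a a"
      using u[OF that] by (simp add: schur_complement_def algebra_simps sum_subtractf sum_distrib_left)
    then show ?thesis
      unfolding row using Kaa by (simp add: field_simps)
  qed
  moreover have "(\<Sum>y\<in>insert a A. K a y * w y) = b a"
    unfolding row using Kaa by simp
  ultimately show ?case by blast
qed

lemma positive_definite_on_solution_unique: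
  assumes "positive_definite_on A K"
    and "\<And>x. x \<in> A \<Longrightarrow> (\<Sum>y\<in>A. K x y * w1 y) = b x"
    and "\<And>x. x \<in> A \<Longrightarrow> (\<Sum>y\<in>A. K x y * w2 y) = b x"
    and "x \<in> A"
  shows "w1 x = w2 x"
proof -
  have "quad_form K A (\<lambda>y. w1 y - w2 y) = 0"
    using assms(2,3) by (simp add: quad_form_eq_sum_mult right_diff_distrib sum_subtractf)
  then show ?thesis
    using positive_definite_on_quad_form_le_0[OF assms(1), of "\<lambda>y. w1 y - w2 y"] assms(4) by simp
qed

lemma inner_power_kernel_nonneg:
  fixes A :: "'a::euclidean_space set"
  shows "0 \<le> quad_form (\<lambda>x y. (x \<bullet> y) ^ k) A v"
proof (induction k arbitrary: v)
  case 0
  then show ?case by (simp add: quad_form_def sum_product[symmetric])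
next
  case (Suc k)
  have power_Suc_inner: "(x \<bullet> y) ^ Suc k = (\<Sum>b\<in>Basis. (x \<bullet> b) * (y \<bullet> b) * (x \<bullet> y) ^ k)"
    for x y :: 'a
    by (subst power_Suc, subst euclidean_inner) (simp add: sum_distrib_right)
  have "quad_form (\<lambda>x y. (x \<bullet> y) ^ Suc k) A v
      = (\<Sum>x\<in>A. \<Sum>y\<in>A. \<Sum>b\<in>Basis. v x * (x \<bullet> b) * (v y * (y \<bullet> b)) * (x \<bullet> y) ^ k)"
    unfolding quad_form_def power_Suc_inner by (simp add: sum_distrib_left mult_ac)
  also have "\<dots> = (\<Sum>b\<in>Basis. quad_form (\<lambda>x y. (x \<bullet> y) ^ k) A (\<lambda>x. v x * (x \<bullet> b)))"
    unfolding quad_form_def by (subst sum.swap) (rule sum.cong[OF refl], rule sum.swap)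
  also have "\<dots> \<ge> 0"
    by (intro sum_nonneg Suc.IH)
  finally show ?case .
qed

lemma exp_inner_kernel_nonneg:
  fixes A :: "'a::euclidean_space set"
  assumes "c \<ge> 0"
  shows "0 \<le> quad_form (\<lambda>x y. exp (c * (x \<bullet> y))) A v"
proof -
  have series: "(\<lambda>n. c ^ n / fact n * quad_form (\<lambda>x y. (x \<bullet> y) ^ n) A v)
          sums quad_form (\<lambda>x y. exp (c * (x \<bullet> y))) A v"
  proof -
    have "(\<lambda>n. \<Sum>x\<in>A. \<Sum>y\<in>A. v x * v y * ((c * (x \<bullet> y)) ^ n /\<^sub>R fact n))
            sums quad_form (\<lambda>x y. exp (c * (x \<bullet> y))) A v"
      unfolding quad_form_def by (intro sums_sum sums_mult exp_converges)
    then show ?thesis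
      by (simp add: quad_form_def sum_distrib_left field_simps)
  qed
  have "0 \<le> c ^ n / fact n * quad_form (\<lambda>x y. (x \<bullet> y) ^ n) A v" for n
    by (rule mult_nonneg_nonneg) (simp_all add: assms inner_power_kernel_nonneg)
  then show ?thesis
    using sums_le[OF _ sums_zero series] by blast
qed

text \<open>\<open>exp (-c\<bar>x - y\<bar>\<^sup>2)\<close> is \<open>exp (2c x \<bullet> y)\<close> rescaled by \<open>exp (-c\<bar>x\<bar>\<^sup>2)\<close> on each side.\<close>
lemma gaussian_kernel_nonneg:
  fixes A :: "'a::euclidean_space set"
  assumes "c \<ge> 0"
  shows "0 \<le> quad_form (\<lambda>x y. exp (- c * (norm (x - y))\<^sup>2)) A v"
proof -
  have exp_split: "exp (- c * (norm (x - y))\<^sup>2)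
          = exp (- c * (norm x)\<^sup>2) * exp (- c * (norm y)\<^sup>2) * exp ((2 * c) * (x \<bullet> y))"
    for x y :: 'a
  proof -
    have "- c * (norm (x - y))\<^sup>2 = - c * (norm x)\<^sup>2 + - c * (norm y)\<^sup>2 + (2 * c) * (x \<bullet> y)"
      by (simp add: power2_norm_eq_inner inner_commute algebra_simps)
    then show ?thesis by (simp only: exp_add)
  qed
  have "quad_form (\<lambda>x y. exp (- c * (norm (x - y))\<^sup>2)) A v
      = quad_form (\<lambda>x y. exp ((2 * c) * (x \<bullet> y))) A (\<lambda>x. v x * exp (- c * (norm x)\<^sup>2))"
    unfolding quad_form_def exp_split by (intro sum.cong refl) (simp only: mult_ac)
  then show ?thesis
    using exp_inner_kernel_nonneg[of "2 * c"] assms by simp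
qed

section \<open>Gaussian integrals\<close>

lemma has_integral_substitution_nonneg:
  fixes f g :: "real \<Rightarrow> real"
  assumes "S \<in> sets lebesgue"
    and "\<And>x. x \<in> S \<Longrightarrow> (g has_field_derivative g' x) (at x within S)" and "inj_on g S"
    and "(f has_integral I) (g ` S)" and "\<And>y. y \<in> g ` S \<Longrightarrow> 0 \<le> f y"
  shows "((\<lambda>x. \<bar>g' x\<bar> * f (g x)) has_integral I) S"
proof -
  have "f absolutely_integrable_on g ` S"
    using assms(4,5) by (intro nonnegative_absolutely_integrable_1) (auto simp: has_integral_integrable)
  then have "(\<lambda>x. \<bar>g' x\<bar> * f (g x)) absolutely_integrable_on S
               \<and> integral S (\<lambda>x. \<bar>g' x\<bar> * f (g x)) = I"
    using has_absolute_integral_change_of_variables_1'[OF assms(1-3)] assms(4)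
    by (simp add: integral_unique)
  then show ?thesis
    using absolutely_integrable_on_def has_integral_integral by blast
qed

lemma has_bochner_integral_lborel_imp_has_integral:
  fixes f :: "'a::euclidean_space \<Rightarrow> 'b::euclidean_space"
  assumes "has_bochner_integral lborel f I"
  shows "(f has_integral I) UNIV"
  using has_integral_integral_lborel[of f] assms by (simp add: has_bochner_integral_iff)

lemma gaussian_has_integral: "((\<lambda>y::real. exp (- y\<^sup>2)) has_integral sqrt pi) UNIV"
proof -
  have "has_bochner_integral lborel (\<lambda>x::real. exp (- x\<^sup>2)) (2 *\<^sub>R (sqrt pi / 2))"
    by (rule has_bochner_integral_even_function[OF gaussian_moment_0]) simp
  then show ?thesis
    by (simp add: has_bochner_integral_lborel_imp_has_integral)
qed

lemma gaussian_has_integral_Ioi: "((\<lambda>y::real. exp (- y\<^sup>2)) has_integral sqrt pi / 2) {0<..}"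
proof -
  have "((\<lambda>x::real. indicator {0..} x *\<^sub>R exp (- x\<^sup>2)) has_integral sqrt pi / 2) UNIV"
    by (rule has_bochner_integral_lborel_imp_has_integral[OF gaussian_moment_0])
  then have "((\<lambda>x::real. if x \<in> {0..} then exp (- x\<^sup>2) else 0) has_integral sqrt pi / 2) UNIV"
    by (rule has_integral_eq[rotated]) (simp add: indicator_def)
  then have "((\<lambda>x::real. exp (- x\<^sup>2)) has_integral sqrt pi / 2) {0..}"
    by (simp only: has_integral_restrict_UNIV)
  moreover have "negligible {x \<in> {0..} - {0<..}. exp (- x\<^sup>2) \<noteq> (0::real)}"
    by (rule negligible_subset[of "{0}"]) auto
  moreover have "negligible {x \<in> {0<..} - {0..}. exp (- x\<^sup>2) \<noteq> (0::real)}"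
    by (rule negligible_subset[of "{}"]) auto
  ultimately show ?thesis
    using has_integral_spike_set_eq[of "{0..}" "{0<..}" "\<lambda>x. exp (- x\<^sup>2)"] by blast
qed

lemma has_integral_exp_minus_sq_Ioi:
  fixes \<alpha> :: real
  assumes "\<alpha> > 0"
  shows "((\<lambda>u. exp (- (\<alpha> * u)\<^sup>2)) has_integral sqrt pi / (2 * \<alpha>)) {0<..}"
proof -
  have "((\<lambda>u. \<bar>\<alpha>\<bar> * exp (- (\<alpha> * u)\<^sup>2)) has_integral sqrt pi / 2) {0<..}"
  proof (rule has_integral_substitution_nonneg[where g = "\<lambda>u. \<alpha> * u" and f = "\<lambda>y. exp (- y\<^sup>2)"])
    show "((\<lambda>u. \<alpha> * u) has_field_derivative \<alpha>) (at u within {0<..})" if "u \<in> {0<..}" for u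
      by (auto intro!: derivative_eq_intros)
    show "inj_on (\<lambda>u. \<alpha> * u) {0<..}"
      using assms by (simp add: inj_on_def)
    have "(\<lambda>u. \<alpha> * u) ` {0<..} = {0<..}"
      using assms by (auto simp: image_iff intro!: bexI[of _ "_ / \<alpha>"])
    then show "((\<lambda>y. exp (- y\<^sup>2)) has_integral sqrt pi / 2) ((\<lambda>u. \<alpha> * u) ` {0<..})"
      using gaussian_has_integral_Ioi by simp
  qed auto
  then have "((\<lambda>u. (1 / \<alpha>) * (\<alpha> * exp (- (\<alpha> * u)\<^sup>2))) has_integral (1 / \<alpha>) * (sqrt pi / 2)) {0<..}"
    using assms by (intro has_integral_mult_right) simp
  then show ?thesis
    using assms by (simp add: mult.commute)
qed

lemma bij_betw_Ioi_minus_inverse: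
  fixes \<alpha> \<beta> :: real
  assumes "\<alpha> > 0" "\<beta> > 0"
  shows "bij_betw (\<lambda>u. \<alpha> * u - \<beta> / u) {0<..} UNIV"
proof (rule bij_betw_imageI)
  have "strict_mono_on {0<..} (\<lambda>u. \<alpha> * u - \<beta> / u)"
    using assms by (intro strict_mono_onI add_less_le_mono diff_strict_mono)
      (auto intro: divide_strict_left_mono simp: frac_less2)
  then show "inj_on (\<lambda>u. \<alpha> * u - \<beta> / u) {0<..}"
    by (rule strict_mono_on_imp_inj_on)
  show "(\<lambda>u. \<alpha> * u - \<beta> / u) ` {0<..} = UNIV"
  proof (intro set_eqI iffI)
    fix y :: real
    \<comment> \<open>the positive root of \<open>\<alpha> u\<^sup>2 - y u - \<beta> = 0\<close>\<close>
    define u where "u = (y + sqrt (y\<^sup>2 + 4 * \<alpha> * \<beta>)) / (2 * \<alpha>)"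
    have "\<bar>y\<bar> < sqrt (y\<^sup>2 + 4 * \<alpha> * \<beta>)"
      using assms real_sqrt_less_mono[of "y\<^sup>2" "y\<^sup>2 + 4 * \<alpha> * \<beta>"] by simp
    then have "u > 0"
      using assms by (simp add: u_def)
    moreover have "\<alpha> * u * u - y * u = \<beta>"
      using assms by (simp add: u_def field_simps power2_eq_square)
    ultimately show "y \<in> (\<lambda>u. \<alpha> * u - \<beta> / u) ` {0<..}"
      by (auto simp: image_iff field_simps intro!: bexI[of _ u])
  qed simp
qed

lemma has_integral_exp_minus_sq_sub_inverse:
  fixes \<alpha> \<beta> :: real
  assumes "\<alpha> > 0" "\<beta> > 0"
  shows "((\<lambda>u. (\<alpha> + \<beta> / u\<^sup>2) * exp (- (\<alpha> * u - \<beta> / u)\<^sup>2)) has_integral sqrt pi) {0<..}"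
proof -
  have "((\<lambda>u. \<bar>\<alpha> + \<beta> / u\<^sup>2\<bar> * exp (- (\<alpha> * u - \<beta> / u)\<^sup>2)) has_integral sqrt pi) {0<..}"
  proof (rule has_integral_substitution_nonneg[where g = "\<lambda>u. \<alpha> * u - \<beta> / u" and f = "\<lambda>y. exp (- y\<^sup>2)"])
    show "((\<lambda>u. \<alpha> * u - \<beta> / u) has_field_derivative \<alpha> + \<beta> / u\<^sup>2) (at u within {0<..})"
      if "u \<in> {0<..}" for u
      using that by (auto intro!: derivative_eq_intros simp: power2_eq_square field_simps)
    show "((\<lambda>y. exp (- y\<^sup>2)) has_integral sqrt pi) ((\<lambda>u. \<alpha> * u - \<beta> / u) ` {0<..})"
      using bij_betw_Ioi_minus_inverse[OF assms] gaussian_has_integral by (simp add: bij_betw_def)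
  qed (use bij_betw_Ioi_minus_inverse[OF assms] in \<open>auto simp: bij_betw_def\<close>)
  moreover have "\<bar>\<alpha> + \<beta> / u\<^sup>2\<bar> = \<alpha> + \<beta> / u\<^sup>2" for u
    using assms by simp
  ultimately show ?thesis
    by simp
qed

lemma has_integral_inverse_substitution_Ioi:
  fixes h :: "real \<Rightarrow> real"
  assumes "c > 0" "(h has_integral I) {0<..}" "\<And>u. u > 0 \<Longrightarrow> 0 \<le> h u"
  shows "((\<lambda>u. c / u\<^sup>2 * h (c / u)) has_integral I) {0<..}"
proof -
  have "((\<lambda>u. \<bar>- c / u\<^sup>2\<bar> * h (c / u)) has_integral I) {0<..}"
  proof (rule has_integral_substitution_nonneg[where g = "\<lambda>u. c / u" and f = h])
    show "((\<lambda>u. c / u) has_field_derivative - c / u\<^sup>2) (at u within {0<..})" if "u \<in> {0<..}" for u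
      using that by (auto intro!: derivative_eq_intros simp: power2_eq_square)
    show "inj_on (\<lambda>u. c / u) {0<..}"
      using assms(1) by (auto intro!: inj_onI simp: field_simps)
    have "(\<lambda>u. c / u) ` {0<..} = {0<..}"
    proof
      show "{0<..} \<subseteq> (\<lambda>u. c / u) ` {0<..}"
      proof
        fix v :: real
        assume "v \<in> {0<..}"
        then have "v = c / (c / v)" "c / v \<in> {0<..}"
          using assms(1) by auto
        then show "v \<in> (\<lambda>u. c / u) ` {0<..}"
          by (rule image_eqI)
      qed
    qed (use assms(1) in auto)
    then show "(h has_integral I) ((\<lambda>u. c / u) ` {0<..})" "\<And>y. y \<in> (\<lambda>u. c / u) ` {0<..} \<Longrightarrow> 0 \<le> h y"
      using assms(2,3) by auto
  qed simp
  then show ?thesis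
    using assms(1) by simp
qed

text \<open>The inversion \<open>u \<mapsto> \<beta> / (\<alpha> u)\<close> leaves the integrand \<open>h\<close> invariant, so \<open>\<alpha> \<integral> h\<close> equals
  \<open>\<integral> \<beta> / u\<^sup>2 h\<close>; their sum \<open>\<integral> (\<alpha> + \<beta> / u\<^sup>2) h\<close> is a shifted Gaussian integral.\<close>
lemma has_integral_exp_minus_sq_minus_inverse_sq:
  fixes \<alpha> \<beta> :: real
  assumes "\<alpha> > 0" "\<beta> > 0"
  shows "((\<lambda>u. exp (- (\<alpha> * u)\<^sup>2 - (\<beta> / u)\<^sup>2)) has_integral sqrt pi * exp (- 2 * \<alpha> * \<beta>) / (2 * \<alpha>))
           {0<..}"
proof -
  define h where "h = (\<lambda>u. exp (- (\<alpha> * u)\<^sup>2 - (\<beta> / u)\<^sup>2))"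
  define I where "I = integral {0<..} h"
  have "exp (- 2 * \<alpha> * \<beta>) * ((\<alpha> + \<beta> / u\<^sup>2) * exp (- (\<alpha> * u - \<beta> / u)\<^sup>2))
          = (\<alpha> + \<beta> / u\<^sup>2) * h u" if "u \<in> {0<..}" for u
  proof -
    have "- 2 * \<alpha> * \<beta> + - (\<alpha> * u - \<beta> / u)\<^sup>2 = - (\<alpha> * u)\<^sup>2 - (\<beta> / u)\<^sup>2"
      using that by (simp add: power2_eq_square field_simps)
    then show ?thesis
      by (simp add: h_def flip: exp_add)
  qed
  then have total: "((\<lambda>u. (\<alpha> + \<beta> / u\<^sup>2) * h u) has_integral exp (- 2 * \<alpha> * \<beta>) * sqrt pi) {0<..}"
    by (rule has_integral_eq[OF _ has_integral_mult_right[OF has_integral_exp_minus_sq_sub_inverse[OF assms]]])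
  have "h absolutely_integrable_on {0<..}"
  proof (rule measurable_bounded_by_integrable_imp_absolutely_integrable)
    show "h \<in> borel_measurable (lebesgue_on {0<..})"
      unfolding h_def by (intro continuous_imp_measurable_on_sets_lebesgue continuous_intros) auto
    show "(\<lambda>u. (\<alpha> + \<beta> / u\<^sup>2) * h u / \<alpha>) integrable_on {0<..}"
      by (rule has_integral_integrable[OF has_integral_divide[OF total]])
    show "norm (h u) \<le> (\<alpha> + \<beta> / u\<^sup>2) * h u / \<alpha>" if "u \<in> {0<..}" for u
      using assms that by (simp add: h_def field_simps)
  qed auto
  then have hI: "(h has_integral I) {0<..}"
    unfolding I_def using absolutely_integrable_on_def has_integral_integral by blast
  have "\<alpha> * ((\<beta> / \<alpha>) / u\<^sup>2 * h ((\<beta> / \<alpha>) / u)) = \<beta> / u\<^sup>2 * h u" if "u \<in> {0<..}" for u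
    using assms that by (simp add: h_def power2_eq_square field_simps)
  then have "((\<lambda>u. \<beta> / u\<^sup>2 * h u) has_integral \<alpha> * I) {0<..}"
    using has_integral_inverse_substitution_Ioi[of "\<beta> / \<alpha>", OF _ hI] assms
    by (intro has_integral_eq[OF _ has_integral_mult_right]) (auto simp: h_def)
  from has_integral_add[OF has_integral_mult_right[OF hI, of \<alpha>] this]
  have "((\<lambda>u. (\<alpha> + \<beta> / u\<^sup>2) * h u) has_integral \<alpha> * I + \<alpha> * I) {0<..}"
    by (simp only: distrib_right)
  then have "exp (- 2 * \<alpha> * \<beta>) * sqrt pi = 2 * \<alpha> * I"
    using has_integral_unique[OF total] by simp
  then have "I = sqrt pi * exp (- 2 * \<alpha> * \<beta>) / (2 * \<alpha>)"
    using assms by (simp add: field_simps)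
  with hI show ?thesis
    by (simp add: h_def)
qed

lemma has_integral_laplace_subordination:
  fixes t r :: real
  assumes "t > 0" "r \<ge> 0"
  shows "((\<lambda>u. exp (- (t / 2 * u)\<^sup>2) * exp (- (r / u)\<^sup>2)) has_integral sqrt pi * exp (- t * r) / t)
           {0<..}"
proof (cases "r = 0")
  case True
  then show ?thesis
    using has_integral_exp_minus_sq_Ioi[of "t / 2"] assms by simp
next
  case False
  then show ?thesis
    using has_integral_exp_minus_sq_minus_inverse_sq[of "t / 2" r] assms by (simp add: mult_exp_exp)
qed

section \<open>Positive definiteness of the Laplace kernel\<close>

lemma has_integral_pos_of_tendsto_at_right:
  fixes f :: "real \<Rightarrow> real"
  assumes "(f has_integral I) {a<..}" "\<And>x. a < x \<Longrightarrow> 0 \<le> f x"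
    and "(f \<longlongrightarrow> L) (at_right a)" "0 < L"
  shows "0 < I"
proof -
  have "L / 2 < L"
    using assms(4) by simp
  from order_tendstoD(1)[OF assms(3) this]
  obtain b where "a < b" and b: "\<And>x. a < x \<Longrightarrow> x < b \<Longrightarrow> L / 2 < f x"
    unfolding eventually_at_right_field by blast
  define s where "s = (\<lambda>x. if x \<in> {a<..<b} then L / 2 else 0)"
  have "((\<lambda>x. L / 2) has_integral L / 2 * (b - a)) {a..b}"
    using has_integral_const_real[of "L / 2" a b] \<open>a < b\<close> by (simp add: mult.commute)
  then have "(s has_integral L / 2 * (b - a)) {a<..}"
    unfolding s_def by (subst has_integral_restrict) (auto simp: has_integral_Icc_iff_Ioo)
  moreover have "s x \<le> f x" if "x \<in> {a<..}" for x
    using that b[of x] assms(2)[of x] by (auto simp: s_def)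
  ultimately have "L / 2 * (b - a) \<le> I"
    using has_integral_le assms(1) by blast
  moreover have "0 < L / 2 * (b - a)"
    using \<open>a < b\<close> assms(4) by simp
  ultimately show ?thesis
    by linarith
qed

lemma tendsto_exp_minus_sq_inverse_at_right:
  fixes r :: real
  assumes "r > 0"
  shows "((\<lambda>u. exp (- (r / u)\<^sup>2)) \<longlongrightarrow> 0) (at_right 0)"
proof -
  have "filterlim (\<lambda>u. r * inverse u) at_top (at_right 0)"
    by (rule filterlim_tendsto_pos_mult_at_top[OF tendsto_const assms filterlim_inverse_at_top_right])
  then have "filterlim (\<lambda>u. (r / u)\<^sup>2) at_top (at_right 0)"
    by (intro filterlim_pow_at_top) (simp_all add: divide_inverse)
  then have "filterlim (\<lambda>u. - (r / u)\<^sup>2) at_bot (at_right 0)"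
    by (simp add: filterlim_uminus_at_top)
  then show ?thesis
    by (rule filterlim_compose[OF exp_at_bot])
qed

lemma tendsto_gaussian_quad_form_at_right:
  fixes A :: "'a::real_normed_vector set"
  assumes "finite A"
  shows "((\<lambda>u. quad_form (\<lambda>x y. exp (- (norm (x - y) / u)\<^sup>2)) A v) \<longlongrightarrow> (\<Sum>x\<in>A. (v x)\<^sup>2))
           (at_right 0)"
proof -
  have "((\<lambda>u. exp (- (norm (x - y) / u)\<^sup>2)) \<longlongrightarrow> of_bool (x = y)) (at_right 0)" for x y :: 'a
    using tendsto_exp_minus_sq_inverse_at_right[of "norm (x - y)"] by simp
  then have "((\<lambda>u. quad_form (\<lambda>x y. exp (- (norm (x - y) / u)\<^sup>2)) A v)
               \<longlongrightarrow> quad_form (\<lambda>x y. of_bool (x = y)) A v) (at_right 0)"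
    unfolding quad_form_def by (intro tendsto_sum tendsto_mult_left)
  also have "quad_form (\<lambda>x y. of_bool (x = y)) A v = (\<Sum>x\<in>A. (v x)\<^sup>2)"
    using assms by (simp add: quad_form_eq_sum_mult power2_eq_square)
  finally show ?thesis .
qed

text \<open>Subordination: up to the factor \<open>sqrt pi / t\<close>, \<open>exp (- t r)\<close> is the integral over \<open>u > 0\<close> of
  the Gaussians \<open>exp (- (r / u)\<^sup>2)\<close> against the weight \<open>exp (- (t u / 2)\<^sup>2)\<close>. These Gaussians are
  positive semidefinite kernels in \<open>r = \<bar>x - y\<bar>\<close> and tend to the identity kernel as \<open>u \<rightarrow> 0\<close>.\<close>
lemma laplace_kernel_positive_definite:
  fixes A :: "'a::euclidean_space set"
  assumes "finite A" "t > 0"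
  shows "positive_definite_on A (\<lambda>x y. exp (- t * norm (x - y)))"
  unfolding positive_definite_on_def
proof (intro allI impI)
  fix v :: "'a \<Rightarrow> real"
  assume "\<exists>x\<in>A. v x \<noteq> 0"
  define G where "G u = (\<lambda>x y :: 'a. exp (- (norm (x - y) / u)\<^sup>2))" for u
  define f where "f = (\<lambda>u. exp (- (t / 2 * u)\<^sup>2) * quad_form (G u) A v)"
  let ?Q = "quad_form (\<lambda>x y. exp (- t * norm (x - y))) A v"
  have "((\<lambda>u. quad_form (\<lambda>x y. exp (- (t / 2 * u)\<^sup>2) * G u x y) A v) has_integral
          (\<Sum>x\<in>A. \<Sum>y\<in>A. v x * v y * (sqrt pi * exp (- t * norm (x - y)) / t))) {0<..}"
    unfolding G_def quad_form_def using assms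
    by (intro has_integral_sum has_integral_mult_right has_integral_laplace_subordination) auto
  moreover have "(\<Sum>x\<in>A. \<Sum>y\<in>A. v x * v y * (sqrt pi * exp (- t * norm (x - y)) / t)) = sqrt pi / t * ?Q"
    by (simp add: quad_form_def sum_distrib_left mult_ac)
  ultimately have integral: "(f has_integral sqrt pi / t * ?Q) {0<..}"
    by (simp add: f_def quad_form_cmult)
  have nonneg: "0 \<le> f u" for u
  proof -
    have "G u = (\<lambda>x y. exp (- (1 / u\<^sup>2) * (norm (x - y))\<^sup>2))"
      by (simp add: G_def power_divide)
    then show ?thesis
      using gaussian_kernel_nonneg[of "1 / u\<^sup>2" A v] by (simp add: f_def)
  qed
  have "((\<lambda>u. exp (- (t / 2 * u)\<^sup>2)) \<longlongrightarrow> exp (- (t / 2 * 0)\<^sup>2)) (at_right 0)"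
    by (intro tendsto_intros)
  from tendsto_mult[OF this tendsto_gaussian_quad_form_at_right[OF assms(1)]]
  have limit: "(f \<longlongrightarrow> (\<Sum>x\<in>A. (v x)\<^sup>2)) (at_right 0)"
    by (simp add: f_def G_def)
  obtain x where "x \<in> A" "v x \<noteq> 0"
    using \<open>\<exists>x\<in>A. v x \<noteq> 0\<close> by blast
  then have "0 < (\<Sum>x\<in>A. (v x)\<^sup>2)"
    using sum_pos2[OF assms(1), of x "\<lambda>x. (v x)\<^sup>2"] by simp
  with has_integral_pos_of_tendsto_at_right[OF integral nonneg limit]
  have "0 < sqrt pi / t * ?Q" .
  moreover have "0 < sqrt pi / t"
    using assms(2) by simp
  ultimately show "0 < ?Q"
    by (rule zero_less_mult_pos)
qed

section \<open>Weightings and magnitude\<close>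

lemma weighting_eqI:
  fixes A :: "'a::euclidean_space set"
  assumes "finite A" "t > 0"
    and "\<And>x. x \<in> A \<Longrightarrow> (\<Sum>y\<in>A. exp (- t * norm (x - y)) * w y) = 1"
    and "\<And>x. x \<notin> A \<Longrightarrow> w x = 0"
  shows "weighting t A = w"
  unfolding weighting_def
proof (rule the_equality)
  show "(\<forall>x\<in>A. (\<Sum>y\<in>A. exp (- t * norm (x - y)) * w y) = 1) \<and> (\<forall>x. x \<notin> A \<longrightarrow> w x = 0)"
    using assms(3,4) by blast
next
  fix w'
  assume w': "(\<forall>x\<in>A. (\<Sum>y\<in>A. exp (- t * norm (x - y)) * w' y) = 1) \<and> (\<forall>x. x \<notin> A \<longrightarrow> w' x = 0)"
  show "w' = w"
  proof
    fix x
    show "w' x = w x"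
    proof (cases "x \<in> A")
      case True
      show ?thesis
        using positive_definite_on_solution_unique[OF laplace_kernel_positive_definite[OF assms(1,2)],
            where b = "\<lambda>_. 1"] True w' assms(3) by blast
    next
      case False
      then show ?thesis
        using w' assms(4) by simp
    qed
  qed
qed

lemma
  fixes A :: "'a::euclidean_space set"
  assumes "finite A" "t > 0"
  shows sum_exp_weighting: "\<And>x. x \<in> A \<Longrightarrow> (\<Sum>y\<in>A. exp (- t * norm (x - y)) * weighting t A y) = 1"
    and weighting_notin: "\<And>x. x \<notin> A \<Longrightarrow> weighting t A x = 0"
proof -
  have "\<exists>w. \<forall>x\<in>A. (\<Sum>y\<in>A. exp (- t * norm (x - y)) * w y) = 1"
    by (rule positive_definite_on_solvable[OF assms(1) laplace_kernel_positive_definite[OF assms]])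
      (simp add: norm_minus_commute)
  then obtain w where w: "\<And>x. x \<in> A \<Longrightarrow> (\<Sum>y\<in>A. exp (- t * norm (x - y)) * w y) = 1"
    by blast
  define w' where "w' = (\<lambda>y. if y \<in> A then w y else 0)"
  have w'_sum: "(\<Sum>y\<in>A. exp (- t * norm (x - y)) * w' y) = 1" if "x \<in> A" for x
    using w[OF that] by (simp add: w'_def cong: sum.cong)
  have w'_notin: "w' x = 0" if "x \<notin> A" for x
    using that by (simp add: w'_def)
  have "weighting t A = w'"
    using weighting_eqI[OF assms w'_sum w'_notin] .
  with w'_sum w'_notin show "\<And>x. x \<in> A \<Longrightarrow> (\<Sum>y\<in>A. exp (- t * norm (x - y)) * weighting t A y) = 1"
    and "\<And>x. x \<notin> A \<Longrightarrow> weighting t A x = 0"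
    by simp_all
qed

lemma quad_form_weighting_diff:
  fixes X Z :: "'a::euclidean_space set"
  assumes "t > 0" "finite Z" "X \<subseteq> Z"
  shows "quad_form (\<lambda>x y. exp (- t * norm (x - y))) Z (\<lambda>x. weighting t Z x - weighting t X x)
           = Mag t Z - Mag t X"
proof -
  let ?K = "\<lambda>x y :: 'a. exp (- t * norm (x - y))"
  let ?wZ = "weighting t Z" and ?wX = "weighting t X"
  have "finite X"
    using assms(2,3) by (rule finite_subset[rotated])
  have wX_notin: "?wX x = 0" if "x \<notin> X" for x
    using weighting_notin[OF \<open>finite X\<close> assms(1) that] .
  have sum_wX: "(\<Sum>x\<in>Z. ?wX x) = Mag t X"
    unfolding Mag_def using assms(2,3) wX_notin by (intro sum.mono_neutral_right) auto
  have K_wZ: "(\<Sum>y\<in>Z. ?K x y * ?wZ y) = 1" if "x \<in> Z" for x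
    using sum_exp_weighting[OF assms(2,1) that] .
  have K_wX: "(\<Sum>y\<in>Z. ?K x y * ?wX y) = 1" if "x \<in> X" for x
  proof -
    have "(\<Sum>y\<in>Z. ?K x y * ?wX y) = (\<Sum>y\<in>X. ?K x y * ?wX y)"
      using assms(2,3) wX_notin by (intro sum.mono_neutral_right) auto
    then show ?thesis
      using sum_exp_weighting[OF \<open>finite X\<close> assms(1) that] by simp
  qed
  have wX_K_wX: "?wX x * (\<Sum>y\<in>Z. ?K x y * ?wX y) = ?wX x" for x
    using K_wX wX_notin by (cases "x \<in> X") simp_all
  have "quad_form ?K Z (\<lambda>x. ?wZ x - ?wX x) = (\<Sum>x\<in>Z. (?wZ x - ?wX x) * (\<Sum>y\<in>Z. ?K x y * (?wZ y - ?wX y)))"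
    by (rule quad_form_eq_sum_mult)
  also have "\<dots> = (\<Sum>x\<in>Z. (?wZ x - ?wX x) * (1 - (\<Sum>y\<in>Z. ?K x y * ?wX y)))"
    using K_wZ by (intro sum.cong refl) (simp add: right_diff_distrib sum_subtractf)
  also have "\<dots> = (\<Sum>x\<in>Z. ?wZ x) - (\<Sum>x\<in>Z. ?wX x)
                  - (\<Sum>x\<in>Z. ?wZ x * (\<Sum>y\<in>Z. ?K x y * ?wX y))
                  + (\<Sum>x\<in>Z. ?wX x * (\<Sum>y\<in>Z. ?K x y * ?wX y))"
    by (simp add: algebra_simps sum_subtractf sum.distrib)
  also have "(\<Sum>x\<in>Z. ?wZ x * (\<Sum>y\<in>Z. ?K x y * ?wX y)) = (\<Sum>y\<in>Z. ?wX y * (\<Sum>x\<in>Z. ?K y x * ?wZ x))"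
    by (rule sum_mult_sum_kernel_commute) (simp add: norm_minus_commute)
  also have "\<dots> = (\<Sum>y\<in>Z. ?wX y)"
    using K_wZ by simp
  also have "(\<Sum>x\<in>Z. ?wX x * (\<Sum>y\<in>Z. ?K x y * ?wX y)) = (\<Sum>x\<in>Z. ?wX x)"
    by (intro sum.cong refl wX_K_wX)
  finally show ?thesis
    using sum_wX by (simp add: Mag_def)
qed

lemma Mag_eq_iff_weighting_eq:
  fixes X Z :: "'a::euclidean_space set"
  assumes "t > 0" "finite Z" "X \<subseteq> Z"
  shows "Mag t Z = Mag t X \<longleftrightarrow> weighting t Z = weighting t X"
proof
  assume "Mag t Z = Mag t X"
  then have form_le_0:
    "quad_form (\<lambda>x y. exp (- t * norm (x - y))) Z (\<lambda>x. weighting t Z x - weighting t X x) \<le> 0"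
    using quad_form_weighting_diff[OF assms] by simp
  show "weighting t Z = weighting t X"
  proof
    fix x
    show "weighting t Z x = weighting t X x"
    proof (cases "x \<in> Z")
      case True
      with positive_definite_on_quad_form_le_0[OF laplace_kernel_positive_definite[OF assms(2,1)] form_le_0]
      show ?thesis
        by simp
    next
      case False
      with assms(3) have "x \<notin> X"
        by blast
      with False show ?thesis
        using weighting_notin[OF assms(2,1)] weighting_notin[OF finite_subset[OF assms(3,2)] assms(1)]
        by simp
    qed
  qed
next
  assume "weighting t Z = weighting t X"
  then show "Mag t Z = Mag t X"
    using quad_form_weighting_diff[OF assms] by (simp add: quad_form_def)
qed

lemma weighting_eq_iff_mag_equiv:
  fixes X Z :: "'a::euclidean_space set"
  assumes "t > 0" "finite Z" "X \<subseteq> Z"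
  shows "weighting t Z = weighting t X \<longleftrightarrow> mag_equiv t X Z"
proof
  have "finite X"
    using assms(2,3) by (rule finite_subset[rotated])
  show "mag_equiv t X Z" if "weighting t Z = weighting t X"
    unfolding mag_equiv_def that using assms(3) weighting_notin[OF \<open>finite X\<close> assms(1)] by auto
  assume "mag_equiv t X Z"
  have wZ_notin: "weighting t Z x = 0" if "x \<notin> X" for x
  proof (rule ccontr)
    assume "weighting t Z x \<noteq> 0"
    moreover from this have "x \<in> Z"
      using weighting_notin[OF assms(2,1)] by blast
    ultimately have "x \<in> {y \<in> X. weighting t X y \<noteq> 0}"
      using \<open>mag_equiv t X Z\<close> unfolding mag_equiv_def by simp
    with that show False
      by simp
  qed
  have wZ_sum: "(\<Sum>y\<in>X. exp (- t * norm (x - y)) * weighting t Z y) = 1" if "x \<in> X" for x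
  proof -
    have "(\<Sum>y\<in>X. exp (- t * norm (x - y)) * weighting t Z y)
            = (\<Sum>y\<in>Z. exp (- t * norm (x - y)) * weighting t Z y)"
      using assms(2,3) wZ_notin by (intro sum.mono_neutral_left) auto
    then show ?thesis
      using sum_exp_weighting[OF assms(2,1)] that assms(3) by auto
  qed
  have "weighting t X = weighting t Z"
    by (rule weighting_eqI[OF \<open>finite X\<close> assms(1) wZ_sum wZ_notin])
  then show "weighting t Z = weighting t X"
    by simp
qed

theorem lemmaB4:
  fixes X Z :: "'a::euclidean_space set" and t :: real
  assumes "t > 0" and "finite Z" and "X \<subseteq> Z"
  shows "Mag t Z = Mag t X \<longleftrightarrow> mag_equiv t X Z"
  using Mag_eq_iff_weighting_eq[OF assms] weighting_eq_iff_mag_equiv[OF assms] by simp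

end
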